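(* Let $P_0$ be a domain, $U$ a free $P_0$-module of rank four with dual $U^*=\operatorname{Hom}_{P_0}(U,P_0)$, and $x,y,z,w$ a basis of $U$ with dual basis $x^*,y^*,z^*,w^*$. Let $$\phi_3=x^{*(3)}+ax^*z^{*(2)}+dy^*z^{*(2)}+ey^*z^*w^*+fy^*w^{*(2)}+gy^{*(2)}z^*+hy^{*(2)}w^*+iy^{*(3)}+jz^{*(3)}+kz^{*(2)}w^*+lz^*w^{*(2)}+mw^{*(3)}\in D_3U^*$$ with $a,d,e,\dots,m\in P_0$. Assume (a) $a\neq0$ in $P_0$ and (b) $\ell\phi_3\neq0$ for all nonzero $\ell\in U$. Then $\Gamma_{\phi_3}$ is not identically zero.
   Context: $D_iU^*=\operatorname{Hom}_{P_0}(\operatorname{Sym}_iU,P_0)$; $D_\bullet U^*$ is the divided power algebra, a module over $\operatorname{Sym}_\bullet U$ via $(uv)(u')=v(uu')$. The divided power monomial $x^{*(a_1)}y^{*(a_2)}z^{*(a_3)}w^{*(a_4)}$ takes value $1$ on $x^{a_1}y^{a_2}z^{a_3}w^{a_4}$ and $0$ on all other monomials of that degree; a factor without parenthesized exponent has exponent one. $D_4U$ is the degree-$4$ divided power of $U$. For $X\in D_4U$, $\Delta(X)\in U^{\otimes4}$ is its comultiplication: for $X=\ell_1^{(e_1)}\cdots\ell_s^{(e_s)}$ with $\sum e_j=4$, $\Delta(X)$ is the sum of all distinct words $u_1\otimes\cdots\otimes u_4$ in which the symbol $\ell_j$ occurs exactly $e_j$ times, extended linearly. $\Gamma_{\phi_3}:D_4U\otimes\bigwedge^4U\to\bigwedge^4U^*$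 is the $P_0$-linear map $\Gamma_{\phi_3}(X\otimes y_1\wedge\cdots\wedge y_4)=\sum(u_1y_1\phi_3)\wedge\cdots\wedge(u_4y_4\phi_3)$, summed over the terms of $\Delta(X)$. *)

theory Defs
  imports Main "HOL-Combinatorics.Permutations"
begin

datatype var = X | Y | Z | W

lemma UNIV_var: "(UNIV :: var set) = {X, Y, Z, W}"
  using var.exhaust by auto

instance var :: finite
  by standard (simp add: UNIV_var)

(* elements of U (resp. U^* ) as coordinate vectors w.r.t. x,y,z,w (resp. x*,y*,z*,w* ) *)
type_synonym 'a vec = "var \<Rightarrow> 'a"

type_synonym mon = "var \<Rightarrow> nat"

definition deg :: "mon \<Rightarrow> nat" where
  "deg \<alpha> = (\<Sum>v\<in>UNIV. \<alpha> v)"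

definition unit_mon :: "var \<Rightarrow> mon" where
  "unit_mon v = (\<lambda>u. if u = v then 1 else 0)"

definition mon4 :: "nat \<Rightarrow> nat \<Rightarrow> nat \<Rightarrow> nat \<Rightarrow> mon" where
  "mon4 p q r s = (\<lambda>v. case v of X \<Rightarrow> p | Y \<Rightarrow> q | Z \<Rightarrow> r | W \<Rightarrow> s)"

(* An element psi of D_d U^* is represented by its values psi(beta) on the
   monomials of degree d (the divided power monomials of D_d U^* form the dual basis).
   Module action of u in U = Sym_1 U:  (u psi)(m) = psi(u m). *)
definition contract :: "'a::comm_semiring_1 vec \<Rightarrow> (mon \<Rightarrow> 'a) \<Rightarrow> (mon \<Rightarrow> 'a)" where
  "contract u \<psi> = (\<lambda>\<beta>. \<Sum>v\<in>UNIV. u v * \<psi> (\<lambda>t. \<beta> t + unit_mon v t))"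

(* coordinates of an element of D_1 U^* = U^* w.r.t. x*,y*,z*,w* *)
definition to_dual :: "(mon \<Rightarrow> 'a) \<Rightarrow> 'a vec" where
  "to_dual \<psi> = (\<lambda>v. \<psi> (unit_mon v))"

definition unit_vec :: "var \<Rightarrow> 'a::zero_neq_one vec" where
  "unit_vec v = (\<lambda>u. if u = v then 1 else 0)"

definition phi3 :: "'a \<Rightarrow> 'a \<Rightarrow> 'a \<Rightarrow> 'a \<Rightarrow> 'a \<Rightarrow> 'a \<Rightarrow> 'a \<Rightarrow> 'a \<Rightarrow> 'a \<Rightarrow> 'a \<Rightarrow> 'a
                    \<Rightarrow> mon \<Rightarrow> 'a::zero_neq_one" where
  "phi3 a d e f g h i j k l m \<alpha> =
    (if \<alpha> = mon4 3 0 0 0 then 1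
     else if \<alpha> = mon4 1 0 2 0 then a
     else if \<alpha> = mon4 0 1 2 0 then d
     else if \<alpha> = mon4 0 1 1 1 then e
     else if \<alpha> = mon4 0 1 0 2 then f
     else if \<alpha> = mon4 0 2 1 0 then g
     else if \<alpha> = mon4 0 2 0 1 then h
     else if \<alpha> = mon4 0 3 0 0 then i
     else if \<alpha> = mon4 0 0 3 0 then j
     else if \<alpha> = mon4 0 0 2 1 then k
     else if \<alpha> = mon4 0 0 1 2 then l
     else if \<alpha> = mon4 0 0 0 3 then m
     else 0)"

definition var_of :: "nat \<Rightarrow> var" where
  "var_of n = (if n = 0 then X else if n = 1 then Y else if n = 2 then Z else W)"

(* coefficient of c_0 /\ c_1 /\ c_2 /\ c_3 (c_k in U^* ) on x* /\ y* /\ z* /\ w* ;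
   Lambda^4 U^* is free of rank one on this generator *)
definition wedge4 :: "(nat \<Rightarrow> 'a::comm_ring_1 vec) \<Rightarrow> 'a" where
  "wedge4 c = (\<Sum>p | p permutes {..<4::nat}. of_int (sign p) * (\<Prod>n<4. c n (var_of (p n))))"

definition content :: "var list \<Rightarrow> mon" where
  "content ws = (\<lambda>v. count_list ws v)"

(* An element X of D_4 U is given by its coordinates Xc on the divided power monomial
   basis x^(a1) y^(a2) z^(a3) w^(a4), a1+..+a4 = 4 (values of Xc at other exponents are
   irrelevant).  Delta(X) in U^{(x)4}: the coefficient of the word ws is Xc (content ws). *)
definition Delta4 :: "(mon \<Rightarrow> 'a) \<Rightarrow> var list \<Rightarrow> 'a" where
  "Delta4 Xc ws = Xc (content ws)"

(* Gamma_phi(X (x) y_0 /\ .. /\ y_3), as coefficient on x* /\ y* /\ z* /\ w* *)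
definition Gamma :: "(mon \<Rightarrow> 'a::comm_ring_1) \<Rightarrow> (mon \<Rightarrow> 'a) \<Rightarrow> (nat \<Rightarrow> 'a vec) \<Rightarrow> 'a" where
  "Gamma \<phi> Xc ys = (\<Sum>ws | length ws = 4.
      Delta4 Xc ws * wedge4 (\<lambda>n. to_dual (contract (unit_vec (ws ! n)) (contract (ys n) \<phi>))))"

end

theory Submission
  imports Defs
begin

(* If \<Gamma>\<^sub>\<phi> vanished, its values on x^(p) y^(q) z^(r) w^(s) \<otimes> x\<wedge>y\<wedge>z\<wedge>w would be
   polynomial relations among the coefficients of \<phi>.  For p = 2 they are a times quadrics,
   so a \<noteq> 0 leaves the quadrics, and together with the relations for p = 1 they force all
   2 \<times> 2 minors of the 2 \<times> 6 matrix of coordinates of y\<phi> and w\<phi> to vanish.  Hence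
   y\<phi> and w\<phi> are linearly dependent: \<ell>\<phi> = 0 for some nonzero \<ell> = p y + q w,
   contradicting (b). *)

lemma sum_UNIV_var: "(\<Sum>v\<in>UNIV. f v) = f X + f Y + f Z + f W"
  by (simp add: UNIV_var add.assoc)

lemma mon4_eq_iff: "mon4 p q r s = mon4 p' q' r' s' \<longleftrightarrow> p = p' \<and> q = q' \<and> r = r' \<and> s = s'"
  unfolding mon4_def
  by (auto simp: fun_eq_iff split: var.splits dest: spec[of _ X] spec[of _ Y] spec[of _ Z] spec[of _ W])

lemma mon4_components: "\<beta> = mon4 (\<beta> X) (\<beta> Y) (\<beta> Z) (\<beta> W)"
  by (auto simp: mon4_def fun_eq_iff split: var.splits)

lemma unit_mon_eq_mon4:
  "unit_mon v = mon4 (of_bool (v = X)) (of_bool (v = Y)) (of_bool (v = Z)) (of_bool (v = W))"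
  unfolding unit_mon_def mon4_def by (auto simp: fun_eq_iff split: var.splits)

lemma mon4_plus:
  "(\<lambda>t. mon4 p q r s t + mon4 p' q' r' s' t) = mon4 (p + p') (q + q') (r + r') (s + s')"
  unfolding mon4_def by (auto simp: fun_eq_iff split: var.splits)

lemma unit_mon_sum3:
  "(\<lambda>t. unit_mon u t + unit_mon v t + unit_mon w t) =
    mon4 (of_bool (u = X) + of_bool (v = X) + of_bool (w = X))
         (of_bool (u = Y) + of_bool (v = Y) + of_bool (w = Y))
         (of_bool (u = Z) + of_bool (v = Z) + of_bool (w = Z))
         (of_bool (u = W) + of_bool (v = W) + of_bool (w = W))"
  unfolding mon4_def unit_mon_def by (auto simp: fun_eq_iff split: var.splits)

lemma content_eq_mon4:
  "content ws = mon4 (count_list ws X) (count_list ws Y) (count_list ws Z) (count_list ws W)"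
  unfolding content_def mon4_def by (auto simp: fun_eq_iff split: var.splits)

lemma deg_eq_2_cases:
  assumes "deg \<beta> = 2"
  shows "\<beta> \<in> {mon4 2 0 0 0, mon4 0 2 0 0, mon4 0 0 2 0, mon4 0 0 0 2, mon4 1 1 0 0,
               mon4 1 0 1 0, mon4 1 0 0 1, mon4 0 1 1 0, mon4 0 1 0 1, mon4 0 0 1 1}"
proof -
  have "\<beta> X + \<beta> Y + \<beta> Z + \<beta> W = 2"
    using assms by (simp add: deg_def sum_UNIV_var)
  then have "(\<beta> X, \<beta> Y, \<beta> Z, \<beta> W) \<in> {(2, 0, 0, 0), (0, 2, 0, 0), (0, 0, 2, 0), (0, 0, 0, 2),
      (1, 1, 0, 0), (1, 0, 1, 0), (1, 0, 0, 1), (0, 1, 1, 0), (0, 1, 0, 1), (0, 0, 1, 1)}"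
    by (cases "\<beta> X"; cases "\<beta> Y"; cases "\<beta> Z"; auto)
  then show ?thesis
    by (subst mon4_components) auto
qed

lemma proportional_trans_nonzero:
  fixes u u' x x' y y' :: "'a::idom"
  assumes "u * x' = x * u'" "u * y' = y * u'" "u \<noteq> 0 \<or> u' \<noteq> 0"
  shows "x * y' = y * x'"
proof -
  have "u * (x * y' - y * x') = 0" "u' * (x * y' - y * x') = 0"
    using assms(1,2) by algebra+
  then show ?thesis
    using assms(3) by auto
qed

lemma rows_dependent_of_minors_vanish:
  fixes r s :: "'i \<Rightarrow> 'a::comm_ring_1"
  assumes "\<And>j j'. j \<in> J \<Longrightarrow> j' \<in> J \<Longrightarrow> r j * s j' = r j' * s j"
  obtains p q where "p \<noteq> 0 \<or> q \<noteq> 0" and "\<And>j. j \<in> J \<Longrightarrow> p * r j + q * s j = 0"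
proof (cases "\<exists>c\<in>J. r c \<noteq> 0 \<or> s c \<noteq> 0")
  case True
  then obtain c where "c \<in> J" "r c \<noteq> 0 \<or> s c \<noteq> 0"
    by blast
  show ?thesis
  proof (rule that[of "s c" "- r c"])
    show "s c \<noteq> 0 \<or> - r c \<noteq> 0"
      using \<open>r c \<noteq> 0 \<or> s c \<noteq> 0\<close> by auto
    show "s c * r j + - r c * s j = 0" if "j \<in> J" for j
      using assms[OF that \<open>c \<in> J\<close>] by (simp add: mult.commute)
  qed
next
  case False
  then show ?thesis
    by (intro that[of 1 0]) auto
qed

lemma wedge4_expand:
  "wedge4 c =
     c 0 X*c 1 Y*c 2 Z*c 3 W - c 0 X*c 1 Y*c 2 W*c 3 Z - c 0 X*c 1 Z*c 2 Y*c 3 W + c 0 X*c 1 Z*c 2 W*c 3 Y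
   + c 0 X*c 1 W*c 2 Y*c 3 Z - c 0 X*c 1 W*c 2 Z*c 3 Y - c 0 Y*c 1 X*c 2 Z*c 3 W + c 0 Y*c 1 X*c 2 W*c 3 Z
   + c 0 Y*c 1 Z*c 2 X*c 3 W - c 0 Y*c 1 Z*c 2 W*c 3 X - c 0 Y*c 1 W*c 2 X*c 3 Z + c 0 Y*c 1 W*c 2 Z*c 3 X
   + c 0 Z*c 1 X*c 2 Y*c 3 W - c 0 Z*c 1 X*c 2 W*c 3 Y - c 0 Z*c 1 Y*c 2 X*c 3 W + c 0 Z*c 1 Y*c 2 W*c 3 X
   + c 0 Z*c 1 W*c 2 X*c 3 Y - c 0 Z*c 1 W*c 2 Y*c 3 X - c 0 W*c 1 X*c 2 Y*c 3 Z + c 0 W*c 1 X*c 2 Z*c 3 Y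
   + c 0 W*c 1 Y*c 2 X*c 3 Z - c 0 W*c 1 Y*c 2 Z*c 3 X - c 0 W*c 1 Z*c 2 X*c 3 Y + c 0 W*c 1 Z*c 2 Y*c 3 X"
proof -
  have "{..<4::nat} = {0, 1, 2, 3}" by auto
  then show ?thesis
    unfolding wedge4_def
    by (simp add: sum_over_permutations_insert sign_compose permutation_swap_id permutation_compose
        sign_swap_id var_of_def transpose_def algebra_simps)
qed

lemma sum_words4:
  "(\<Sum>ws | length ws = 4. F ws) = (\<Sum>p\<in>UNIV. \<Sum>q\<in>UNIV. \<Sum>r\<in>UNIV. \<Sum>s\<in>(UNIV::var set). F [p, q, r, s])"
proof -
  have words: "{ws::var list. length ws = 4} = (\<lambda>(p, q, r, s). [p, q, r, s]) ` UNIV"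
  proof (intro set_eqI iffI)
    fix ws :: "var list"
    assume "ws \<in> {ws. length ws = 4}"
    then obtain p q r s where "ws = [p, q, r, s]"
      by (auto simp: numeral_eq_Suc length_Suc_conv)
    then show "ws \<in> (\<lambda>(p, q, r, s). [p, q, r, s]) ` UNIV"
      by (intro image_eqI[where x = "(p, q, r, s)"]) auto
  qed auto
  have "inj (\<lambda>(p, q, r, s). [p::var, q, r, s])"
    by (auto simp: inj_on_def)
  then have "(\<Sum>ws | length ws = 4. F ws) = (\<Sum>(p, q, r, s)\<in>UNIV. F [p, q, r, s])"
    unfolding words by (subst sum.reindex) (auto simp: comp_def case_prod_beta)
  then show ?thesis
    by (simp add: UNIV_Times_UNIV[symmetric] sum.cartesian_product del: UNIV_Times_UNIV)
qed

definition dp_monomial :: "nat \<Rightarrow> nat \<Rightarrow> nat \<Rightarrow> nat \<Rightarrow> mon \<Rightarrow> 'a::zero_neq_one" where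
  "dp_monomial p q r s = (\<lambda>\<mu>. if \<mu> = mon4 p q r s then 1 else 0)"

definition basis4 :: "nat \<Rightarrow> 'a::zero_neq_one vec" where
  "basis4 n = unit_vec (var_of n)"

lemma Gamma_basis4:
  "Gamma \<phi> Xc basis4 =
    (\<Sum>p\<in>UNIV. \<Sum>q\<in>UNIV. \<Sum>r\<in>UNIV. \<Sum>s\<in>UNIV. Xc (content [p, q, r, s]) *
       wedge4 (\<lambda>n v. \<phi> (\<lambda>t. unit_mon v t + unit_mon ([p, q, r, s] ! n) t + unit_mon (var_of n) t)))"
proof -
  have "to_dual (contract (unit_vec u) (contract (unit_vec w) \<phi>))
      = (\<lambda>v. \<phi> (\<lambda>t. unit_mon v t + unit_mon u t + unit_mon w t))" for u w
    by (cases u; cases w; simp add: fun_eq_iff to_dual_def contract_def unit_vec_def sum_UNIV_var add.assoc)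
  then show ?thesis
    unfolding Gamma_def sum_words4 Delta4_def basis4_def by simp
qed

lemma Gamma_phi3_dp_monomial:
  fixes a d e f g h i j k l m :: "'a::comm_ring_1"
  defines "\<phi> \<equiv> phi3 a d e f g h i j k l m"
  shows "Gamma \<phi> (dp_monomial 2 2 0 0) basis4 = a * (f*i - h^2)"
    and "Gamma \<phi> (dp_monomial 2 1 1 0) basis4 = a * (i*l - 2*e*h + f*g)"
    and "Gamma \<phi> (dp_monomial 2 1 0 1) basis4 = a * (i*m - f*h)"
    and "Gamma \<phi> (dp_monomial 2 0 2 0) basis4 = a * (g*l - e^2)"
    and "Gamma \<phi> (dp_monomial 2 0 1 1) basis4 = a * (g*m - 2*e*f + h*l)"
    and "Gamma \<phi> (dp_monomial 2 0 0 2) basis4 = a * (h*m - f^2)"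
    and "Gamma \<phi> (dp_monomial 1 3 0 0) basis4 = d*f*i - e^2*i - f*g^2 + 2*e*g*h - d*h^2"
    and "Gamma \<phi> (dp_monomial 1 2 1 0) basis4 = d*i*l - 2*e*i*k - g^2*l + e^2*g + 2*g*h*k + f*i*j - d*f*g - h^2*j"
    and "Gamma \<phi> (dp_monomial 1 2 0 1) basis4 = d*i*m - 2*e*i*l - g^2*m + 2*g*h*l - d*f*h + f*i*k + e^2*h - h^2*k"
    and "Gamma \<phi> (dp_monomial 1 1 2 0) basis4 = i*j*l - i*k^2 - d*g*l + 2*d*h*k - 2*e*h*j + f*g*j - d^2*f + d*e^2"
    and "Gamma \<phi> (dp_monomial 1 1 1 1) basis4 = i*j*m - i*k*l - d*g*m + 3*f*g*k + 3*d*h*l - f*h*j - 2*e*g*l - 2*d*e*f + 2*e^3 - 2*e*h*k"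
    and "Gamma \<phi> (dp_monomial 1 1 0 2) basis4 = i*k*m - i*l^2 - 2*e*g*m + 2*f*g*l - f*h*k + d*h*m + e^2*f - d*f^2"
    and "Gamma \<phi> (dp_monomial 1 0 3 0) basis4 = g*j*l - g*k^2 - d^2*l + 2*d*e*k - e^2*j"
    and "Gamma \<phi> (dp_monomial 1 0 2 1) basis4 = g*j*m - g*k*l - d^2*m + 2*d*f*k - 2*e*f*j + h*j*l - h*k^2 + e^2*k"
    and "Gamma \<phi> (dp_monomial 1 0 1 2) basis4 = g*k*m - g*l^2 - 2*d*e*m + 2*d*f*l + e^2*l + h*j*m - h*k*l - f^2*j"
    and "Gamma \<phi> (dp_monomial 1 0 0 3) basis4 = h*k*m - h*l^2 - e^2*m + 2*e*f*l - f^2*k"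
  unfolding Gamma_basis4 dp_monomial_def
  by (simp_all add: sum_UNIV_var content_eq_mon4 mon4_eq_iff,
      simp_all only: wedge4_expand unit_mon_sum3,
      simp_all add: var_of_def phi3_def \<phi>_def mon4_eq_iff,
      simp_all add: algebra_simps power2_eq_square power3_eq_cube)

lemma phi3_YW_minors_of_relations:
  fixes a d e f g h i j k l m :: "'a::idom"
  assumes "a \<noteq> 0"
    and a_times_quadrics: "a * (f*i - h^2) = 0" "a * (i*l - 2*e*h + f*g) = 0" "a * (i*m - f*h) = 0"
      "a * (g*l - e^2) = 0" "a * (g*m - 2*e*f + h*l) = 0" "a * (h*m - f^2) = 0"
    and cubics: "d*f*i - e^2*i - f*g^2 + 2*e*g*h - d*h^2 = 0"
      "d*i*l - 2*e*i*k - g^2*l + e^2*g + 2*g*h*k + f*i*j - d*f*g - h^2*j = 0"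
      "d*i*m - 2*e*i*l - g^2*m + 2*g*h*l - d*f*h + f*i*k + e^2*h - h^2*k = 0"
      "i*j*l - i*k^2 - d*g*l + 2*d*h*k - 2*e*h*j + f*g*j - d^2*f + d*e^2 = 0"
      "i*j*m - i*k*l - d*g*m + 3*f*g*k + 3*d*h*l - f*h*j - 2*e*g*l - 2*d*e*f + 2*e^3 - 2*e*h*k = 0"
      "i*k*m - i*l^2 - 2*e*g*m + 2*f*g*l - f*h*k + d*h*m + e^2*f - d*f^2 = 0"
      "g*j*l - g*k^2 - d^2*l + 2*d*e*k - e^2*j = 0"
      "g*j*m - g*k*l - d^2*m + 2*d*f*k - 2*e*f*j + h*j*l - h*k^2 + e^2*k = 0"
      "g*k*m - g*l^2 - 2*d*e*m + 2*d*f*l + e^2*l + h*j*m - h*k*l - f^2*j = 0"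
      "h*k*m - h*l^2 - e^2*m + 2*e*f*l - f^2*k = 0"
  shows "i*e = g*h" "i*f = h*h" "i*k = d*h" "i*l = e*h" "i*m = f*h"
    and "g*f = h*e" "g*k = d*e" "g*l = e*e" "g*m = f*e"
    and "h*k = d*f" "h*l = e*f" "h*m = f*f"
    and "d*l = e*k" "d*m = f*k"
    and "e*m = f*l"
proof -
  have quadrics: "f*i - h^2 = 0" "i*l - 2*e*h + f*g = 0" "i*m - f*h = 0"
      "g*l - e^2 = 0" "g*m - 2*e*f + h*l = 0" "h*m - f^2 = 0"
    using a_times_quadrics \<open>a \<noteq> 0\<close> by simp_all
  note relations = quadrics cubics
  txt \<open>Fact nm is the minor of columns n and m of the matrix with rows (i, g, h, d, e, f) = y\<phi>
    and (h, e, f, k, l, m) = w\<phi>, columns indexed by y^2, yz, yw, z^2, zw, w^2.\<close>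
  have 13: "i*f = h*h" using relations by algebra
  have 14: "i*k = d*h" using relations by algebra
  have 15: "i*l = e*h" using relations by algebra
  have 16: "i*m = f*h" using relations by algebra
  have 23: "g*f = h*e" using relations by algebra
  have 24: "g*k = d*e" using relations by algebra
  have 25: "g*l = e*e" using relations by algebra
  have 34: "h*k = d*f" using relations by algebra
  have 36: "h*m = f*f" using relations by algebra
  have 45: "d*l = e*k" using relations by algebra
  have 46: "d*m = f*k" using relations by algebra
  have 12: "i*e = g*h" using relations 13 14 15 16 23 24 25 34 36 45 46 by algebra
  txt \<open>The remaining minors compare two columns through a nonzero column (i, h) or (d, k);
    when both vanish, the quadrics and the last cubic kill the minors directly.\<close>
  have "g*m = f*e \<and> h*l = e*f \<and> e*m = f*l"
  proof -
    consider "i \<noteq> 0 \<or> h \<noteq> 0" | "d \<noteq> 0 \<or> k \<noteq> 0" | "i = 0" "h = 0" "d = 0" "k = 0"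
      by blast
    then show ?thesis
    proof cases
      case 1
      then show ?thesis
        using proportional_trans_nonzero[OF 12 16] proportional_trans_nonzero[OF 13 15]
          proportional_trans_nonzero[OF 15 16] by blast
    next
      case 2
      then show ?thesis
        using proportional_trans_nonzero[OF 24[symmetric] 46] proportional_trans_nonzero[OF 34[symmetric] 45]
          proportional_trans_nonzero[OF 45 46] by blast
    next
      case 3
      then have "f = 0"
        using relations(6) by simp
      moreover have "g*m = 0"
        using relations(5) 3 \<open>f = 0\<close> by simp
      moreover have "e*m = 0"
        using relations(16) 3 \<open>f = 0\<close> by (simp add: power2_eq_square)
      ultimately show ?thesis
        using 3 by simp
    qed
  qed
  then show "i*e = g*h" "i*f = h*h" "i*k = d*h" "i*l = e*h" "i*m = f*h"
    and "g*f = h*e" "g*k = d*e" "g*l = e*e" "g*m = f*e"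
    and "h*k = d*f" "h*l = e*f" "h*m = f*f"
    and "d*l = e*k" "d*m = f*k"
    and "e*m = f*l"
    using 12 13 14 15 16 23 24 25 34 36 45 46 by auto
qed

lemma phi3_YW_columns:
  fixes a d e f g h i j k l m :: "'a::zero_neq_one"
  assumes "deg \<beta> = 2"
  shows "(phi3 a d e f g h i j k l m (\<lambda>t. \<beta> t + unit_mon Y t), phi3 a d e f g h i j k l m (\<lambda>t. \<beta> t + unit_mon W t))
           \<in> {(0, 0), (i, h), (g, e), (h, f), (d, k), (e, l), (f, m)}"
  using deg_eq_2_cases[OF assms]
  by (elim insertE emptyE; simp add: unit_mon_eq_mon4 mon4_plus phi3_def mon4_eq_iff)

lemma phi3_YW_minors:
  fixes a d e f g h i j k l m :: "'a::comm_ring_1"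
  assumes "i*e = g*h" "i*f = h*h" "i*k = d*h" "i*l = e*h" "i*m = f*h"
    and "g*f = h*e" "g*k = d*e" "g*l = e*e" "g*m = f*e"
    and "h*k = d*f" "h*l = e*f" "h*m = f*f"
    and "d*l = e*k" "d*m = f*k"
    and "e*m = f*l"
    and "deg \<beta> = 2" "deg \<beta>' = 2"
  shows "phi3 a d e f g h i j k l m (\<lambda>t. \<beta> t + unit_mon Y t) * phi3 a d e f g h i j k l m (\<lambda>t. \<beta>' t + unit_mon W t) =
         phi3 a d e f g h i j k l m (\<lambda>t. \<beta>' t + unit_mon Y t) * phi3 a d e f g h i j k l m (\<lambda>t. \<beta> t + unit_mon W t)"
proof -
  let ?S = "{(0, 0), (i, h), (g, e), (h, f), (d, k), (e, l), (f, m)}"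
  have "\<forall>c\<in>?S. \<forall>c'\<in>?S. fst c * snd c' = fst c' * snd c"
    by (simp add: assms(1-15))
  from this[rule_format, OF phi3_YW_columns[OF assms(16)] phi3_YW_columns[OF assms(17)]]
  show ?thesis
    by simp
qed

lemma phi3_YW_dependent_of_Gamma_vanishing:
  fixes a d e f g h i j k l m :: "'a::idom"
  defines "\<phi> \<equiv> phi3 a d e f g h i j k l m"
  assumes "a \<noteq> 0" and Gamma_zero: "\<And>Xc ys. Gamma \<phi> Xc ys = 0"
  obtains p q where "p \<noteq> 0 \<or> q \<noteq> 0"
    and "\<And>\<beta>. deg \<beta> = 2 \<Longrightarrow> p * \<phi> (\<lambda>t. \<beta> t + unit_mon Y t) + q * \<phi> (\<lambda>t. \<beta> t + unit_mon W t) = 0"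
proof (rule rows_dependent_of_minors_vanish[of "{\<beta>. deg \<beta> = 2}"])
  note minors = phi3_YW_minors_of_relations[OF \<open>a \<noteq> 0\<close>
      Gamma_phi3_dp_monomial[of a d e f g h i j k l m, folded \<phi>_def, unfolded Gamma_zero, symmetric]]
  show "\<phi> (\<lambda>t. \<beta> t + unit_mon Y t) * \<phi> (\<lambda>t. \<beta>' t + unit_mon W t) =
      \<phi> (\<lambda>t. \<beta>' t + unit_mon Y t) * \<phi> (\<lambda>t. \<beta> t + unit_mon W t)"
    if "\<beta> \<in> {\<beta>. deg \<beta> = 2}" "\<beta>' \<in> {\<beta>. deg \<beta> = 2}" for \<beta> \<beta>'
    using phi3_YW_minors[OF minors] that unfolding \<phi>_def by simp
qed (use that in auto)

lemma contract_Y_W: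
  "contract (\<lambda>v. if v = Y then p else if v = W then q else 0) \<phi> \<beta> =
    p * \<phi> (\<lambda>t. \<beta> t + unit_mon Y t) + q * \<phi> (\<lambda>t. \<beta> t + unit_mon W t)"
  by (simp add: contract_def sum_UNIV_var)

theorem proposition5p1:
  fixes a d e f g h i j k l m :: "'a::idom"
  assumes "a \<noteq> 0"
    and "\<forall>lv :: 'a vec. (\<exists>v. lv v \<noteq> 0) \<longrightarrow>
           (\<exists>\<beta>. deg \<beta> = 2 \<and> contract lv (phi3 a d e f g h i j k l m) \<beta> \<noteq> 0)"
  shows "\<exists>Xc ys. Gamma (phi3 a d e f g h i j k l m) Xc ys \<noteq> 0"
proof (rule ccontr)
  let ?\<phi> = "phi3 a d e f g h i j k l m"
  assume "\<nexists>Xc ys. Gamma ?\<phi> Xc ys \<noteq> 0"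
  then obtain p q where "p \<noteq> 0 \<or> q \<noteq> 0"
    and kernel: "\<And>\<beta>. deg \<beta> = 2 \<Longrightarrow>
      p * ?\<phi> (\<lambda>t. \<beta> t + unit_mon Y t) + q * ?\<phi> (\<lambda>t. \<beta> t + unit_mon W t) = 0"
    using phi3_YW_dependent_of_Gamma_vanishing[OF \<open>a \<noteq> 0\<close>] by blast
  let ?lv = "\<lambda>v. if v = Y then p else if v = W then q else 0"
  have "?lv Y \<noteq> 0 \<or> ?lv W \<noteq> 0"
    using \<open>p \<noteq> 0 \<or> q \<noteq> 0\<close> by simp
  then have "\<exists>v. ?lv v \<noteq> 0"
    by blast
  then obtain \<beta> where "deg \<beta> = 2" and "contract ?lv ?\<phi> \<beta> \<noteq> 0"
    using assms(2)[rule_format, of ?lv] by blast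
  then show False
    using kernel by (simp add: contract_Y_W)
qed

end
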